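(* There exists an aperiodic probability $F\in\mathbb{P}(\mathbb{Z}^+)$ with $\sum_{k\ge0}kF(k)=+\infty$ and $\lim_{\xi\to0}|\mathrm{Arg}(1-\widehat{F}(\xi))|=\pi/2$. Consequently there is no $\theta\in(0,\pi/2)$ such that $\phi_F(w)\in\mathbb{D}\cup\{1\}$ and $1-\phi_F(w)\in\overline{\Lambda}_\theta$ for all $w\in\overline{\mathbb{D}}$, and $F\notin\mathcal{A}$.
   Context: $\mathbb{P}(\mathbb{Z}^+)$ is the set of functions $F:\mathbb{Z}\to[0,1]$ with $\sum F=1$ and $F(k)=0$ for $k<0$. $F$ is adapted if $\mathrm{supp}(F)$ generates the group $\mathbb{Z}$, aperiodic if every translate $\delta_m*F$ ($m\in\mathbb{Z}$) is adapted. $\widehat{F}(\xi)=\sum_kF(k)e^{-ik\xi}$, $\phi_F(w)=\sum_{k\ge0}F(k)w^k$ for $w\in\overline{\mathbb{D}}=\{|w|\le1\}$, $\mathbb{D}=\{|w|<1\}$, $\mathrm{Arg}$ is the principal argument, $\overline{\Lambda}_\theta=\{0\}\cup\{z:|\mathrm{Arg}\,z|\le\theta\}$. $\mathcal{A}=\{F\in\mathbb{P}(\mathbb{Z}^+):\sup_{n\in\mathbb{N}}n\sum_k|F^{(n)}(k)-F^{(n+1)}(k)|<\infty\}$, $F^{(n)}$ the $n$-th convolution power. *)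

theory Defs
  imports "HOL-Analysis.Analysis"
begin

definition PZplus :: "(int \<Rightarrow> real) \<Rightarrow> bool" where
  "PZplus F \<longleftrightarrow> (\<forall>k. 0 \<le> F k \<and> F k \<le> 1) \<and> (F has_sum 1) UNIV \<and> (\<forall>k<0. F k = 0)"

definition supp :: "(int \<Rightarrow> real) \<Rightarrow> int set" where
  "supp F = {k. F k \<noteq> 0}"

definition int_subgroup :: "int set \<Rightarrow> bool" where
  "int_subgroup H \<longleftrightarrow> 0 \<in> H \<and> (\<forall>a\<in>H. \<forall>b\<in>H. a + b \<in> H) \<and> (\<forall>a\<in>H. - a \<in> H)"

definition generated_subgroup :: "int set \<Rightarrow> int set" where
  "generated_subgroup S = \<Inter> {H. int_subgroup H \<and> S \<subseteq> H}"

definition adapted :: "(int \<Rightarrow> real) \<Rightarrow> bool" where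
  "adapted F \<longleftrightarrow> generated_subgroup (supp F) = UNIV"

definition conv :: "(int \<Rightarrow> real) \<Rightarrow> (int \<Rightarrow> real) \<Rightarrow> int \<Rightarrow> real" where
  "conv F G k = (\<Sum>\<^sub>\<infinity>j\<in>UNIV. F j * G (k - j))"

definition delta :: "int \<Rightarrow> int \<Rightarrow> real" where
  "delta m k = (if k = m then 1 else 0)"

fun conv_pow :: "(int \<Rightarrow> real) \<Rightarrow> nat \<Rightarrow> int \<Rightarrow> real" where
  "conv_pow F 0 = delta 0"
| "conv_pow F (Suc n) = conv F (conv_pow F n)"

definition aperiodic :: "(int \<Rightarrow> real) \<Rightarrow> bool" where
  "aperiodic F \<longleftrightarrow> (\<forall>m::int. adapted (conv (delta m) F))"

definition Fhat :: "(int \<Rightarrow> real) \<Rightarrow> real \<Rightarrow> complex" where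
  "Fhat F \<xi> = (\<Sum>\<^sub>\<infinity>k\<in>UNIV. complex_of_real (F k) * exp (- \<i> * of_int k * of_real \<xi>))"

definition phi :: "(int \<Rightarrow> real) \<Rightarrow> complex \<Rightarrow> complex" where
  "phi F w = (\<Sum>k. complex_of_real (F (int k)) * w ^ k)"

definition Lambda_bar :: "real \<Rightarrow> complex set" where
  "Lambda_bar \<theta> = {0} \<union> {z. \<bar>Arg z\<bar> \<le> \<theta>}"

definition classA :: "(int \<Rightarrow> real) set" where
  "classA = {F. PZplus F \<and>
     (\<exists>C. \<forall>n::nat. n \<ge> 1 \<longrightarrow>
        real n * (\<Sum>\<^sub>\<infinity>k\<in>UNIV. \<bar>conv_pow F n k - conv_pow F (Suc n) k\<bar>) \<le> C)}"

end

theory Submission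
  imports Defs "HOL-Real_Asymp.Real_Asymp"
begin

text \<open>
  The example is \<open>F(k) = 1/(k(k-1))\<close> for \<open>k \<ge> 2\<close>, with generating function
  \<open>\<phi>(w) = w + (1 - w) log(1 - w)\<close>. Writing \<open>u = 1 - e\<^sup>-\<^sup>i\<^sup>\<xi>\<close>, a point of the circle
  \<open>|1 - u| = 1\<close>, this gives \<open>1 - F^(\<xi>) = u (1 - log u)\<close>. Here \<open>Re u = |u|\<^sup>2/2\<close> is negligible,
  whereas \<open>1 - log u\<close> has real part \<open>1 - log |u| \<rightarrow> \<infinity>\<close> and imaginary part bounded by \<open>\<pi>\<close>;
  so \<open>1 - F^(\<xi>)\<close> becomes almost purely imaginary as \<open>\<xi> \<rightarrow> 0\<close>.

  Both consequences hold for every \<open>F \<in> P(Z\<^sup>+)\<close> with this property. The sector condition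
  already fails on the unit circle. Membership in \<open>A\<close> bounds \<open>n |\<phi>\<^sup>n (1 - \<phi>)|\<close> on the closed
  disc, but for \<open>z = 1 - \<phi>(w)\<close> small and nearly imaginary, Bernoulli's inequality keeps
  \<open>|1 - z|\<^sup>n \<ge> 1/2\<close> for all \<open>n\<close> up to a large multiple of \<open>1/|z|\<close>.
\<close>

section \<open>Aperiodicity\<close>

lemma int_subgroup_eq_UNIV_if_one:
  assumes "int_subgroup H" "1 \<in> H"
  shows "H = UNIV"
proof -
  have nat_in: "int n \<in> H" for n
    by (induction n) (use assms in \<open>auto simp: int_subgroup_def\<close>)
  have "k \<in> H" for k
  proof (cases "0 \<le> k")
    case True thus ?thesis using nat_in[of "nat k"] by simp
  next
    case False thus ?thesis
      using nat_in[of "nat (- k)"] assms(1) unfolding int_subgroup_def by force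
  qed
  thus ?thesis by blast
qed

lemma adapted_if_consecutive_in_supp:
  assumes "k \<in> supp G" "k + 1 \<in> supp G"
  shows "adapted G"
proof -
  have "H = UNIV" if "int_subgroup H" "supp G \<subseteq> H" for H
  proof -
    have "(k + 1) + - k \<in> H" using that assms unfolding int_subgroup_def by blast
    thus ?thesis using int_subgroup_eq_UNIV_if_one[OF that(1)] by simp
  qed
  thus ?thesis unfolding adapted_def generated_subgroup_def by blast
qed

lemma conv_delta_left: "conv (delta m) G k = G (k - m)"
proof -
  have "conv (delta m) G k = (\<Sum>\<^sub>\<infinity>j\<in>{m}. delta m j * G (k - j))"
    unfolding conv_def by (rule infsum_cong_neutral) (auto simp: delta_def)
  thus ?thesis by (simp add: delta_def)
qed

lemma aperiodic_if_consecutive_in_supp: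
  assumes "F k \<noteq> 0" "F (k + 1) \<noteq> 0"
  shows "aperiodic F"
  unfolding aperiodic_def
proof
  fix m
  show "adapted (conv (delta m) F)"
    by (rule adapted_if_consecutive_in_supp[of "k + m"])
       (use assms in \<open>simp_all add: supp_def conv_delta_left add.commute add.left_commute\<close>)
qed

section \<open>Series indexed by the integers\<close>

lemma vanishes_off_range_int:
  assumes "\<And>k. k < 0 \<Longrightarrow> f k = 0" "k \<notin> range int"
  shows "f k = 0"
proof -
  have "k < 0" using assms(2) by (metis nat_0_le not_less rangeI)
  thus ?thesis by (rule assms(1))
qed

lemma has_sum_int_if_sums_nat:
  fixes f :: "int \<Rightarrow> 'a::banach"
  assumes "\<And>k. k < 0 \<Longrightarrow> f k = 0" "summable (\<lambda>n. norm (f (int n)))" "(\<lambda>n. f (int n)) sums S"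
  shows "(f has_sum S) UNIV"
proof -
  have "((f \<circ> int) has_sum S) UNIV"
    using norm_summable_imp_has_sum[OF assms(2,3)] by (simp add: o_def)
  hence "(f has_sum S) (range int)"
    by (subst has_sum_reindex) (auto simp: inj_on_def)
  thus ?thesis
    by (subst has_sum_cong_neutral[where T = "range int"])
       (auto intro: vanishes_off_range_int[OF assms(1)])
qed

lemma sums_nat_if_has_sum_int:
  fixes f :: "int \<Rightarrow> 'a::{comm_monoid_add, topological_space}"
  assumes "\<And>k. k < 0 \<Longrightarrow> f k = 0" "(f has_sum S) UNIV"
  shows "(\<lambda>n. f (int n)) sums S"
proof -
  have "(f has_sum S) (range int)"
    using assms(2) by (subst has_sum_cong_neutral[where T = UNIV])
      (auto intro: vanishes_off_range_int[OF assms(1)])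
  hence "((f \<circ> int) has_sum S) UNIV"
    by (subst (asm) has_sum_reindex) (auto simp: inj_on_def)
  thus ?thesis by (auto simp: o_def dest: has_sum_imp_sums)
qed

lemma summable_norm_gen_fun:
  fixes G :: "int \<Rightarrow> real" and w :: complex
  assumes "summable (\<lambda>k. \<bar>G (int k)\<bar>)" "cmod w \<le> 1"
  shows "summable (\<lambda>k. norm (complex_of_real (G (int k)) * w ^ k))"
  by (rule summable_comparison_test'[OF assms(1), of 0])
     (use assms(2) in \<open>auto simp: norm_mult norm_power intro!: mult_left_le power_le_one\<close>)

lemma sums_phi:
  fixes G :: "int \<Rightarrow> real" and w :: complex
  assumes "summable (\<lambda>k. \<bar>G (int k)\<bar>)" "cmod w \<le> 1"
  shows "(\<lambda>k. complex_of_real (G (int k)) * w ^ k) sums phi G w"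
  unfolding phi_def using summable_norm_cancel[OF summable_norm_gen_fun[OF assms]]
  by (rule summable_sums)

lemma norm_phi_le_infsum_abs:
  fixes G :: "int \<Rightarrow> real" and w :: complex
  assumes "\<And>k. k < 0 \<Longrightarrow> G k = 0" "summable (\<lambda>k. \<bar>G (int k)\<bar>)" "cmod w \<le> 1"
  shows "cmod (phi G w) \<le> (\<Sum>\<^sub>\<infinity>k\<in>UNIV. \<bar>G k\<bar>)"
proof -
  have "((\<lambda>k. \<bar>G k\<bar>) has_sum (\<Sum>m. \<bar>G (int m)\<bar>)) UNIV"
    by (rule has_sum_int_if_sums_nat) (use assms(1,2) in \<open>auto intro: summable_sums\<close>)
  hence "(\<Sum>\<^sub>\<infinity>k\<in>UNIV. \<bar>G k\<bar>) = (\<Sum>m. \<bar>G (int m)\<bar>)" by (rule infsumI)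
  moreover have "cmod (phi G w) \<le> (\<Sum>m. norm (complex_of_real (G (int m)) * w ^ m))"
    unfolding phi_def by (rule summable_norm[OF summable_norm_gen_fun[OF assms(2,3)]])
  moreover have "(\<Sum>m. norm (complex_of_real (G (int m)) * w ^ m)) \<le> (\<Sum>m. \<bar>G (int m)\<bar>)"
    by (rule suminf_le[OF _ summable_norm_gen_fun[OF assms(2,3)] assms(2)])
       (use assms(3) in \<open>auto simp: norm_mult norm_power intro!: mult_left_le power_le_one\<close>)
  ultimately show ?thesis by linarith
qed


section \<open>Complex numbers close to the imaginary axis\<close>

text \<open>Take \<open>n = \<lceil>M/|z|\<rceil>\<close> with \<open>M = 2|C| + 2\<close>: then \<open>n |Re z| \<le> 1/2\<close>, so by Bernoulli
  \<open>|1 - z|\<^sup>n \<ge> (1 - Re z)\<^sup>n \<ge> 1/2\<close> and \<open>n |(1 - z)\<^sup>n z| \<ge> M/2 > C\<close>.\<close>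

lemma exists_n_pow_mult_gt:
  fixes z :: complex and C :: real
  assumes "z \<noteq> 0" "cmod z \<le> 1/4" "\<bar>Re z\<bar> \<le> cmod z / (8 * \<bar>C\<bar> + 8)"
  shows "\<exists>n\<ge>1. C < real n * cmod ((1 - z) ^ n * z)"
proof -
  define M where "M = 2 * \<bar>C\<bar> + 2"
  define t where "t = cmod z"
  define r where "r = Re z"
  define n where "n = nat \<lceil>M / t\<rceil>"
  have t: "0 < t" "t \<le> 1/4" using assms(1,2) by (auto simp: t_def)
  have M: "2 \<le> M" by (simp add: M_def)
  have "0 < M / t" using t M by simp
  hence n_ge: "M / t \<le> real n" and n_less: "real n < M / t + 1"
    unfolding n_def by (simp_all add: of_nat_nat) linarith+
  have n1: "1 \<le> n" using n_ge t M by (cases n) (auto simp: field_simps)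
  have r: "\<bar>r\<bar> \<le> t / (4 * M)" using assms(3) by (simp add: r_def t_def M_def algebra_simps)
  have "real n * \<bar>r\<bar> \<le> (M / t + 1) * (t / (4 * M))"
    using n_less r by (intro mult_mono) auto
  also have "\<dots> = 1/4 + t / (4 * M)" using t M by (simp add: field_simps)
  also have "\<dots> \<le> 1/2" using t M by (simp add: field_simps)
  finally have nr: "real n * \<bar>r\<bar> \<le> 1/2" .
  have "\<bar>r\<bar> \<le> t" unfolding r_def t_def by (rule abs_Re_le_cmod)
  have "real n * r \<le> real n * \<bar>r\<bar>" by (intro mult_left_mono) auto
  hence "1/2 \<le> 1 + real n * (- r)" using nr by simp
  also have "\<dots> \<le> (1 + - r) ^ n" by (rule Bernoulli_inequality) (use \<open>\<bar>r\<bar> \<le> t\<close> t in auto)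
  also have "\<dots> \<le> cmod (1 - z) ^ n"
    using complex_Re_le_cmod[of "1 - z"] \<open>\<bar>r\<bar> \<le> t\<close> t by (intro power_mono) (auto simp: r_def)
  finally have "real n * (t / 2) \<le> real n * cmod ((1 - z) ^ n * z)"
    using t by (intro mult_left_mono) (auto simp: norm_mult norm_power t_def)
  moreover have "C < real n * (t / 2)"
    using n_ge t by (simp add: M_def divide_le_eq)
  ultimately have "C < real n * cmod ((1 - z) ^ n * z)" by linarith
  thus ?thesis using n1 by blast
qed

lemma abs_Arg_eq_arccos: "z \<noteq> 0 \<Longrightarrow> \<bar>Arg z\<bar> = arccos (Re z / cmod z)"
proof -
  assume z: "z \<noteq> 0"
  have "arccos (cos \<bar>Arg z\<bar>) = \<bar>Arg z\<bar>"
    using mpi_less_Arg[of z] Arg_le_pi[of z] by (intro arccos_cos) auto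
  thus ?thesis using cos_Arg[OF z] by simp
qed

lemma abs_Arg_tendsto_pi_half:
  assumes "\<forall>\<^sub>F x in L. f x \<noteq> 0" "((\<lambda>x. Re (f x) / cmod (f x)) \<longlongrightarrow> 0) L"
  shows "((\<lambda>x. \<bar>Arg (f x)\<bar>) \<longlongrightarrow> pi / 2) L"
proof -
  have "((\<lambda>x. arccos (Re (f x) / cmod (f x))) \<longlongrightarrow> arccos 0) L"
    by (rule isCont_tendsto_compose[OF _ assms(2)]) (rule isCont_arccos, auto)
  hence "((\<lambda>x. arccos (Re (f x) / cmod (f x))) \<longlongrightarrow> pi / 2) L" by simp
  moreover have "\<forall>\<^sub>F x in L. arccos (Re (f x) / cmod (f x)) = \<bar>Arg (f x)\<bar>"
    using assms(1) by eventually_elim (simp add: abs_Arg_eq_arccos)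
  ultimately show ?thesis by (rule Lim_transform_eventually)
qed

lemma eventually_Re_le_if_abs_Arg_tendsto:
  assumes "((\<lambda>x. \<bar>Arg (f x)\<bar>) \<longlongrightarrow> pi / 2) L" "0 < \<epsilon>"
  shows "\<forall>\<^sub>F x in L. f x \<noteq> 0 \<and> \<bar>Re (f x)\<bar> \<le> cmod (f x) * \<epsilon>"
proof -
  have "((\<lambda>x. cos \<bar>Arg (f x)\<bar>) \<longlongrightarrow> cos (pi / 2)) L"
    by (rule isCont_tendsto_compose[OF isCont_cos assms(1)])
  hence "((\<lambda>x. cos (Arg (f x))) \<longlongrightarrow> 0) L" by simp
  from tendstoD[OF this assms(2)]
  have "\<forall>\<^sub>F x in L. \<bar>cos (Arg (f x))\<bar> < \<epsilon>" by (simp add: dist_real_def)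
  moreover have "\<forall>\<^sub>F x in L. 0 < \<bar>Arg (f x)\<bar>"
    using order_tendstoD(1)[OF assms(1), of 0] by simp
  ultimately show ?thesis
  proof eventually_elim
    case (elim x)
    hence "f x \<noteq> 0" by (auto simp: Arg_zero)
    with elim show ?case by (simp add: cos_Arg abs_divide divide_less_eq mult.commute)
  qed
qed

lemma mult_one_minus_Ln_ne_zero:
  fixes u :: complex
  assumes "u \<noteq> 0" "cmod u < 1"
  shows "u * (1 - Ln u) \<noteq> 0"
proof -
  have "ln (cmod u) < 0" using assms by simp
  moreover have "Re (1 - Ln u) = 1 - ln (cmod u)" using assms(1) by simp
  ultimately have "1 - Ln u \<noteq> 0" by auto
  thus ?thesis using assms(1) by simp
qed

text \<open>The condition \<open>|1 - u| = 1\<close> forces \<open>Re u = |u|\<^sup>2/2\<close>, so in \<open>Re (u (1 - Ln u))\<close> only the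
  term \<open>Im u \<cdot> Im (Ln u)\<close> is of order \<open>|u|\<close>, whereas \<open>|1 - Ln u| \<ge> 1 - ln |u|\<close>.\<close>

lemma abs_Re_div_norm_mult_one_minus_Ln_le:
  fixes u :: complex
  assumes u: "u \<noteq> 0" "cmod u < 1" and circle: "cmod (1 - u) = 1"
  shows "\<bar>Re (u * (1 - Ln u))\<bar> / cmod (u * (1 - Ln u)) \<le> cmod u / 2 + pi / (1 - ln (cmod u))"
proof -
  define a where "a = 1 - Ln u"
  have Re_a: "Re a = 1 - ln (cmod u)" using u by (simp add: a_def)
  moreover have "ln (cmod u) < 0" using u by simp
  ultimately have "1 \<le> Re a" by simp
  have Im_a: "\<bar>Im a\<bar> \<le> pi"
    unfolding a_def using mpi_less_Im_Ln[of u] Im_Ln_le_pi[of u] u by auto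
  have a: "Re a \<le> cmod a" "0 < cmod a"
    using complex_Re_le_cmod[of a] \<open>1 \<le> Re a\<close> by linarith+
  have up: "0 < cmod u" using u by simp
  have "(1 - Re u) ^ 2 + (Im u) ^ 2 = 1" using circle cmod_power2[of "1 - u"] by simp
  hence Re_u: "Re u = cmod u ^ 2 / 2"
    unfolding cmod_power2 by (simp add: power2_eq_square algebra_simps)
  have "0 \<le> Re u" unfolding Re_u by simp
  have "\<bar>Re (u * a)\<bar> \<le> Re u * cmod a + cmod u * pi"
  proof -
    have "\<bar>Re u * Re a\<bar> \<le> Re u * cmod a"
      using \<open>0 \<le> Re u\<close> abs_Re_le_cmod[of a] by (simp add: abs_mult mult_left_mono)
    moreover have "\<bar>Im u * Im a\<bar> \<le> cmod u * pi"
      using abs_Im_le_cmod[of u] Im_a by (simp add: abs_mult mult_mono)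
    ultimately show ?thesis by simp
  qed
  hence "\<bar>Re (u * a)\<bar> / cmod (u * a) \<le> (Re u * cmod a + cmod u * pi) / (cmod u * cmod a)"
    using up a by (simp add: norm_mult divide_right_mono)
  also have "\<dots> = cmod u / 2 + pi / cmod a"
    using up a Re_u by (simp add: field_simps power2_eq_square)
  also have "\<dots> \<le> cmod u / 2 + pi / (1 - ln (cmod u))"
    using a Re_a \<open>1 \<le> Re a\<close> by (simp add: frac_le)
  finally show ?thesis by (simp add: a_def)
qed

section \<open>Probabilities on \<open>Z\<^sup>+\<close> whose \<open>1 - F^\<close> turns imaginary at 0\<close>

context
  fixes F :: "int \<Rightarrow> real"
  assumes F: "PZplus F"
begin

lemma PZplus_nonneg: "0 \<le> F k"
  using F by (simp add: PZplus_def)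

lemma PZplus_vanishes_neg: "k < 0 \<Longrightarrow> F k = 0"
  using F by (simp add: PZplus_def)

lemma PZplus_sums: "(\<lambda>k. F (int k)) sums 1"
  using F by (intro sums_nat_if_has_sum_int) (auto simp: PZplus_def)

lemma PZplus_summable: "summable (\<lambda>k. F (int k))"
  using PZplus_sums by (rule sums_summable)

lemma PZplus_summable_abs: "summable (\<lambda>k. \<bar>F (int k)\<bar>)"
  using PZplus_summable by (simp add: PZplus_nonneg)

lemma phi_PZplus_one: "phi F 1 = 1"
proof -
  have "(\<lambda>k. complex_of_real (F (int k))) sums 1"
    using sums_of_real[OF PZplus_sums] by simp
  thus ?thesis unfolding phi_def by (simp add: sums_iff)
qed

lemma conv_eq_sum_atMost:
  assumes "\<And>k. k < 0 \<Longrightarrow> G k = 0"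
  shows "conv F G (int m) = (\<Sum>i\<le>m. F (int i) * G (int (m - i)))"
proof -
  have "conv F G (int m) = (\<Sum>\<^sub>\<infinity>j\<in>int ` {..m}. F j * G (int m - j))"
    unfolding conv_def
  proof (rule infsum_cong_neutral)
    fix j assume j: "j \<in> UNIV - int ` {..m}"
    show "F j * G (int m - j) = 0"
    proof (cases "j < 0")
      case True thus ?thesis by (simp add: PZplus_vanishes_neg)
    next
      case False
      then obtain i where "j = int i" using nonneg_int_cases[of j] by force
      with j have "int m - j < 0" by auto
      thus ?thesis using assms by simp
    qed
  qed auto
  also have "\<dots> = (\<Sum>j\<in>int ` {..m}. F j * G (int m - j))" by simp
  also have "\<dots> = (\<Sum>i\<le>m. F (int i) * G (int m - int i))"
    by (subst sum.reindex) (auto simp: inj_on_def)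
  also have "\<dots> = (\<Sum>i\<le>m. F (int i) * G (int (m - i)))"
    by (intro sum.cong) (auto simp: of_nat_diff)
  finally show ?thesis .
qed

lemma conv_vanishes_neg:
  assumes "\<And>k. k < 0 \<Longrightarrow> G k = 0" "k < 0"
  shows "conv F G k = 0"
proof -
  have "F j * G (k - j) = 0" for j
    using assms by (cases "j < 0") (auto simp: PZplus_vanishes_neg)
  thus ?thesis unfolding conv_def by (intro infsum_0) blast
qed

lemma conv_nonneg: "(\<And>k. 0 \<le> G k) \<Longrightarrow> 0 \<le> conv F G k"
  unfolding conv_def using PZplus_nonneg by (auto intro!: infsum_nonneg)

lemma summable_conv:
  assumes "\<And>k. k < 0 \<Longrightarrow> G k = 0" "\<And>k. 0 \<le> G k" "summable (\<lambda>k. G (int k))"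
  shows "summable (\<lambda>k. conv F G (int k))"
proof -
  have "(\<lambda>m. \<Sum>i\<le>m. F (int i) * G (int (m - i))) sums ((\<Sum>k. F (int k)) * (\<Sum>k. G (int k)))"
    by (rule Cauchy_product_sums) (use PZplus_summable PZplus_nonneg assms(2,3) in auto)
  thus ?thesis by (simp add: conv_eq_sum_atMost[OF assms(1)] sums_summable)
qed

lemma sums_phi_conv:
  assumes "\<And>k. k < 0 \<Longrightarrow> G k = 0" "summable (\<lambda>k. \<bar>G (int k)\<bar>)" "cmod w \<le> 1"
  shows "(\<lambda>k. complex_of_real (conv F G (int k)) * w ^ k) sums (phi F w * phi G w)"
proof -
  have "(\<lambda>m. \<Sum>i\<le>m. (complex_of_real (F (int i)) * w ^ i)
                 * (complex_of_real (G (int (m - i))) * w ^ (m - i)))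
          sums ((\<Sum>k. complex_of_real (F (int k)) * w ^ k) * (\<Sum>k. complex_of_real (G (int k)) * w ^ k))"
    by (rule Cauchy_product_sums)
       (use summable_norm_gen_fun PZplus_summable_abs assms(2,3) in auto)
  moreover have "(\<Sum>i\<le>m. (complex_of_real (F (int i)) * w ^ i)
                 * (complex_of_real (G (int (m - i))) * w ^ (m - i)))
      = complex_of_real (conv F G (int m)) * w ^ m" for m
    by (auto simp: conv_eq_sum_atMost[OF assms(1)] sum_distrib_right power_add[symmetric]
             intro!: sum.cong)
  ultimately show ?thesis by (simp add: phi_def)
qed

lemma conv_pow_vanishes_neg: "k < 0 \<Longrightarrow> conv_pow F n k = 0"
  by (induction n arbitrary: k) (auto simp: delta_def intro: conv_vanishes_neg)

lemma conv_pow_nonneg: "0 \<le> conv_pow F n k"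
  by (induction n arbitrary: k) (auto simp: delta_def intro: conv_nonneg)

lemma summable_conv_pow: "summable (\<lambda>k. conv_pow F n (int k))"
proof (induction n)
  case 0
  have "(\<lambda>k. delta 0 (int k)) = (\<lambda>k. if k = 0 then 1 else 0)" by (auto simp: delta_def)
  thus ?case using summable_single[of 0 "\<lambda>_. 1::real"] by simp
next
  case (Suc n)
  thus ?case by (simp add: summable_conv conv_pow_vanishes_neg conv_pow_nonneg)
qed

lemma phi_conv_pow:
  assumes "cmod w \<le> 1"
  shows "phi (conv_pow F n) w = phi F w ^ n"
proof (induction n)
  case 0
  have "(\<lambda>k. complex_of_real (delta 0 (int k)) * w ^ k) = (\<lambda>k. if k = 0 then 1 else 0)"
    by (auto simp: delta_def)
  thus ?case using sums_single[of 0 "\<lambda>_. 1::complex"] by (simp add: phi_def sums_iff)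
next
  case (Suc n)
  have "phi (conv_pow F (Suc n)) w = phi F w * phi (conv_pow F n) w"
    using sums_phi_conv[of "conv_pow F n"] summable_conv_pow[of n] assms
    by (auto simp: phi_def sums_iff conv_pow_vanishes_neg conv_pow_nonneg)
  thus ?case using Suc.IH by simp
qed

lemma continuous_on_phi: "continuous_on (cball 0 1) (phi F)"
proof -
  have "uniform_limit (cball 0 1) (\<lambda>n w. \<Sum>i<n. complex_of_real (F (int i)) * w ^ i)
          (\<lambda>w. \<Sum>i. complex_of_real (F (int i)) * w ^ i) sequentially"
    by (rule Weierstrass_m_test_ev[OF _ PZplus_summable])
       (auto simp: norm_mult norm_power PZplus_nonneg intro!: always_eventually mult_left_le power_le_one)
  hence "continuous_on (cball 0 1) (\<lambda>w. \<Sum>i. complex_of_real (F (int i)) * w ^ i)"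
    by (rule uniform_limit_theorem[rotated]) (auto intro!: always_eventually continuous_intros)
  thus ?thesis unfolding phi_def by (simp add: fun_eq_iff)
qed

text \<open>Abel's theorem: the boundary value is the radial limit along \<open>r w\<close>, \<open>r \<rightarrow> 1\<^sup>-\<close>.\<close>

lemma phi_eq_if_eq_on_disc:
  assumes g: "continuous_on (cball 0 1 - {1}) g" "\<And>z. cmod z < 1 \<Longrightarrow> phi F z = g z"
    and w: "cmod w \<le> 1" "w \<noteq> 1"
  shows "phi F w = g w"
proof -
  have radial: "((\<lambda>r::real. of_real r * w) \<longlongrightarrow> w) (at_left 1)"
    by (auto intro!: tendsto_eq_intros)
  have "\<forall>\<^sub>F r in at_left (1::real). 0 < r \<and> r < 1"
    by (rule eventually_mono[OF eventually_at_left_real[of 0 1]]) auto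
  hence inside: "\<forall>\<^sub>F r in at_left (1::real). cmod (of_real r * w) < 1"
  proof eventually_elim
    case (elim r)
    have "cmod (of_real r * w) = r * cmod w" using elim by (simp add: norm_mult)
    also have "\<dots> \<le> r" using elim w by (simp add: mult_le_cancel_left1)
    finally show ?case using elim by simp
  qed
  have "((\<lambda>r. phi F (of_real r * w)) \<longlongrightarrow> phi F w) (at_left 1)"
    by (rule continuous_on_tendsto_compose[OF continuous_on_phi radial])
       (use w inside in \<open>auto elim: eventually_mono\<close>)
  moreover have "((\<lambda>r. g (of_real r * w)) \<longlongrightarrow> g w) (at_left 1)"
    by (rule continuous_on_tendsto_compose[OF g(1) radial])
       (use w inside in \<open>auto elim!: eventually_mono\<close>)
  hence "((\<lambda>r. phi F (of_real r * w)) \<longlongrightarrow> g w) (at_left 1)"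
    by (rule Lim_transform_eventually) (use inside in \<open>auto elim!: eventually_mono simp: g(2)\<close>)
  ultimately show ?thesis using tendsto_unique[OF trivial_limit_at_left_real] by blast
qed

lemma Fhat_eq_phi: "Fhat F \<xi> = phi F (exp (- \<i> * of_real \<xi>))"
proof -
  define w where "w = exp (- \<i> * of_real \<xi>)"
  have w: "cmod w = 1" unfolding w_def by (simp add: norm_exp_eq_Re)
  have "exp (- \<i> * of_int (int n) * of_real \<xi>) = w ^ n" for n
    unfolding w_def by (subst exp_of_nat_mult[symmetric]) (simp add: algebra_simps)
  hence "((\<lambda>k. complex_of_real (F k) * exp (- \<i> * of_int k * of_real \<xi>)) has_sum phi F w) UNIV"
    using summable_norm_gen_fun[OF PZplus_summable_abs] sums_phi[OF PZplus_summable_abs] w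
    by (intro has_sum_int_if_sums_nat) (auto simp: PZplus_vanishes_neg)
  thus ?thesis unfolding Fhat_def w_def by (rule infsumI)
qed

lemma Fhat_tendsto_at_0: "(Fhat F \<longlongrightarrow> 1) (at 0)"
proof -
  have "((\<lambda>\<xi>::real. exp (- \<i> * of_real \<xi>)) \<longlongrightarrow> 1) (at 0)"
    by (auto intro!: tendsto_eq_intros)
  hence "((\<lambda>\<xi>. phi F (exp (- \<i> * of_real \<xi>))) \<longlongrightarrow> phi F 1) (at 0)"
    by (rule continuous_on_tendsto_compose[OF continuous_on_phi]) (auto simp: norm_exp_eq_Re)
  moreover have "Fhat F = (\<lambda>\<xi>. phi F (exp (- \<i> * of_real \<xi>)))"
    by (rule ext) (rule Fhat_eq_phi)
  ultimately show ?thesis by (simp add: phi_PZplus_one)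
qed

lemma norm_phi_pow_mult_le:
  assumes "cmod w \<le> 1"
  shows "cmod (phi F w ^ n * (1 - phi F w))
           \<le> (\<Sum>\<^sub>\<infinity>k\<in>UNIV. \<bar>conv_pow F n k - conv_pow F (Suc n) k\<bar>)"
proof -
  define G where "G k = conv_pow F n k - conv_pow F (Suc n) k" for k
  have summable_abs: "summable (\<lambda>k. \<bar>conv_pow F m (int k)\<bar>)" for m
    using summable_conv_pow[of m] by (simp add: conv_pow_nonneg)
  have G_summable: "summable (\<lambda>k. \<bar>G (int k)\<bar>)"
    by (rule summable_comparison_test'[OF summable_add[OF summable_abs[of n] summable_abs[of "Suc n"]], of 0])
       (simp add: G_def abs_triangle_ineq4)
  have "(\<lambda>k. complex_of_real (G (int k)) * w ^ k) sums (phi F w ^ n - phi F w ^ Suc n)"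
    using sums_diff[OF sums_phi[OF summable_abs[of n] assms] sums_phi[OF summable_abs[of "Suc n"] assms]]
    by (simp add: G_def phi_conv_pow[OF assms] algebra_simps del: conv_pow.simps)
  hence "phi G w = phi F w ^ n * (1 - phi F w)"
    by (simp add: phi_def sums_iff algebra_simps)
  moreover have "cmod (phi G w) \<le> (\<Sum>\<^sub>\<infinity>k\<in>UNIV. \<bar>G k\<bar>)"
    by (rule norm_phi_le_infsum_abs[OF _ G_summable assms])
       (simp add: G_def conv_pow_vanishes_neg del: conv_pow.simps)
  ultimately show ?thesis by (simp add: G_def)
qed

lemma not_classA_if_abs_Arg_tendsto:
  assumes "((\<lambda>\<xi>. \<bar>Arg (1 - Fhat F \<xi>)\<bar>) \<longlongrightarrow> pi / 2) (at 0)"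
  shows "F \<notin> classA"
proof
  assume "F \<in> classA"
  then obtain C where C: "\<And>n. 1 \<le> n \<Longrightarrow>
      real n * (\<Sum>\<^sub>\<infinity>k\<in>UNIV. \<bar>conv_pow F n k - conv_pow F (Suc n) k\<bar>) \<le> C"
    unfolding classA_def by auto
  have "\<forall>\<^sub>F \<xi> in at 0. 1 - Fhat F \<xi> \<noteq> 0
          \<and> \<bar>Re (1 - Fhat F \<xi>)\<bar> \<le> cmod (1 - Fhat F \<xi>) * (1 / (8 * \<bar>C\<bar> + 8))"
    by (rule eventually_Re_le_if_abs_Arg_tendsto[OF assms]) simp
  moreover have "((\<lambda>\<xi>. 1 - Fhat F \<xi>) \<longlongrightarrow> 0) (at 0)"
    using tendsto_diff[OF tendsto_const[of 1] Fhat_tendsto_at_0] by simp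
  from order_tendstoD(2)[OF tendsto_norm_zero[OF this], of "1/4"]
  have "\<forall>\<^sub>F \<xi> in at 0. cmod (1 - Fhat F \<xi>) < 1/4" by simp
  ultimately have "\<forall>\<^sub>F \<xi> in at 0. 1 - Fhat F \<xi> \<noteq> 0 \<and> cmod (1 - Fhat F \<xi>) \<le> 1/4
      \<and> \<bar>Re (1 - Fhat F \<xi>)\<bar> \<le> cmod (1 - Fhat F \<xi>) / (8 * \<bar>C\<bar> + 8)"
    by eventually_elim simp
  then obtain \<xi> :: real where \<xi>: "1 - Fhat F \<xi> \<noteq> 0" "cmod (1 - Fhat F \<xi>) \<le> 1/4"
      "\<bar>Re (1 - Fhat F \<xi>)\<bar> \<le> cmod (1 - Fhat F \<xi>) / (8 * \<bar>C\<bar> + 8)"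
    using eventually_happens'[OF at_neq_bot] by blast
  define w where "w = exp (- \<i> * of_real \<xi>)"
  have w: "cmod w \<le> 1" by (simp add: w_def norm_exp_eq_Re)
  obtain n where n: "1 \<le> n" "C < real n * cmod (phi F w ^ n * (1 - phi F w))"
    using exists_n_pow_mult_gt[OF \<xi>] by (auto simp: Fhat_eq_phi w_def mult.commute)
  have "real n * cmod (phi F w ^ n * (1 - phi F w))
          \<le> real n * (\<Sum>\<^sub>\<infinity>k\<in>UNIV. \<bar>conv_pow F n k - conv_pow F (Suc n) k\<bar>)"
    by (rule mult_left_mono[OF norm_phi_pow_mult_le[OF w]]) simp
  thus False using C[OF n(1)] n(2) by linarith
qed

lemma exists_outside_sector_if_abs_Arg_tendsto:
  assumes "((\<lambda>\<xi>. \<bar>Arg (1 - Fhat F \<xi>)\<bar>) \<longlongrightarrow> pi / 2) (at 0)" "\<theta> < pi / 2"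
  shows "\<exists>w. cmod w \<le> 1 \<and> 1 - phi F w \<notin> Lambda_bar \<theta>"
proof -
  have "max \<theta> 0 < pi / 2" using assms(2) pi_gt_zero by (simp add: max_def)
  hence "\<forall>\<^sub>F \<xi> in at 0. max \<theta> 0 < \<bar>Arg (1 - Fhat F \<xi>)\<bar>"
    by (rule order_tendstoD(1)[OF assms(1)])
  then obtain \<xi> :: real where \<xi>: "max \<theta> 0 < \<bar>Arg (1 - Fhat F \<xi>)\<bar>"
    using eventually_happens'[OF at_neq_bot] by blast
  have "1 - phi F (exp (- \<i> * of_real \<xi>)) \<notin> Lambda_bar \<theta>"
    using \<xi> by (auto simp: Lambda_bar_def Arg_zero Fhat_eq_phi)
  thus ?thesis by (intro exI[of _ "exp (- \<i> * of_real \<xi>)"]) (simp add: norm_exp_eq_Re)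
qed

end

section \<open>The example \<open>F(k) = 1/(k(k-1))\<close>\<close>

definition tele_prob :: "int \<Rightarrow> real" where
  "tele_prob k = (if 2 \<le> k then 1 / (of_int k * (of_int k - 1)) else 0)"

lemma tele_prob_eq_0: "k < 2 \<Longrightarrow> tele_prob k = 0"
  by (simp add: tele_prob_def)

lemma tele_prob_nonneg: "0 \<le> tele_prob k"
  by (simp add: tele_prob_def)

lemma tele_prob_le_one: "tele_prob k \<le> 1"
proof (cases "2 \<le> k")
  case True
  hence "2 * 1 \<le> of_int k * (of_int k - (1::real))" by (intro mult_mono) auto
  thus ?thesis using True by (simp add: tele_prob_def)
qed (simp add: tele_prob_def)

lemma tele_prob_Suc_Suc: "tele_prob (int (Suc (Suc m))) = 1 / (real m + 1) - 1 / (real m + 2)"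
  by (simp add: tele_prob_def field_simps)

lemma sum_tele_prob_lessThan: "(\<Sum>k<Suc (Suc m). tele_prob (int k)) = 1 - 1 / (real m + 1)"
proof (induction m)
  case 0
  show ?case by (simp add: tele_prob_def)
next
  case (Suc m)
  have "(\<Sum>k<Suc (Suc (Suc m)). tele_prob (int k))
      = (\<Sum>k<Suc (Suc m). tele_prob (int k)) + tele_prob (int (Suc (Suc m)))"
    by (simp only: sum.lessThan_Suc)
  also have "\<dots> = 1 - 1 / (real m + 1) + (1 / (real m + 1) - 1 / (real m + 2))"
    by (simp only: Suc.IH tele_prob_Suc_Suc)
  finally show ?case by simp
qed

lemma sums_tele_prob: "(\<lambda>k. tele_prob (int k)) sums 1"
proof -
  have "(\<lambda>m. 1 - 1 / (real m + 1)) \<longlonglongrightarrow> 1"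
    using tendsto_diff[OF tendsto_const LIMSEQ_inverse_real_of_nat, of 1]
    by (simp add: inverse_eq_divide add.commute)
  hence "(\<lambda>m. \<Sum>k<m + 2. tele_prob (int k)) \<longlonglongrightarrow> 1"
    by (simp only: add_2_eq_Suc' sum_tele_prob_lessThan)
  thus ?thesis unfolding sums_def by (rule LIMSEQ_offset)
qed

lemma PZplus_tele_prob: "PZplus tele_prob"
proof -
  have "(tele_prob has_sum 1) UNIV"
    by (rule has_sum_int_if_sums_nat)
       (use sums_tele_prob tele_prob_nonneg in \<open>auto simp: tele_prob_eq_0 intro: sums_summable\<close>)
  thus ?thesis unfolding PZplus_def using tele_prob_nonneg tele_prob_le_one tele_prob_eq_0 by auto
qed

lemma not_summable_first_moment_tele_prob: "\<not> summable (\<lambda>k. real k * tele_prob (int k))"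
proof
  assume "summable (\<lambda>k. real k * tele_prob (int k))"
  hence "summable (\<lambda>k. real (Suc (Suc k)) * tele_prob (int (Suc (Suc k))))"
    by (subst (asm) summable_Suc_iff[symmetric], subst (asm) summable_Suc_iff[symmetric])
  moreover have "real (Suc (Suc k)) * tele_prob (int (Suc (Suc k))) = 1 / real (Suc k)" for k
  proof -
    have "(real k + 2) * (1 / (real k + 1) - 1 / (real k + 2)) = (real k + 2) / (real k + 1) - 1"
      by (simp add: right_diff_distrib)
    also have "\<dots> = 1 / (real k + 1)" by (simp add: field_simps)
    finally show ?thesis unfolding tele_prob_Suc_Suc by (simp add: add.commute)
  qed
  ultimately have "summable (\<lambda>k. inverse (real (Suc k)))" by (simp add: inverse_eq_divide)
  thus False using not_summable_harmonic summable_Suc_iff by blast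
qed

lemma aperiodic_tele_prob: "aperiodic tele_prob"
  by (rule aperiodic_if_consecutive_in_supp[of _ 2]) (simp_all add: tele_prob_def)

lemma sum_gen_fun_tele_prob_lessThan:
  fixes w :: complex
  shows "(\<Sum>k<Suc (Suc m). complex_of_real (tele_prob (int k)) * w ^ k)
     = w + (w - 1) * (\<Sum>k<Suc m. w ^ k / of_nat k) - w ^ Suc m / of_nat (Suc m)"
proof (induction m)
  case 0
  show ?case by (simp add: tele_prob_def)
next
  case (Suc m)
  have "(\<Sum>k<Suc (Suc (Suc m)). complex_of_real (tele_prob (int k)) * w ^ k)
      = (\<Sum>k<Suc (Suc m). complex_of_real (tele_prob (int k)) * w ^ k)
        + complex_of_real (tele_prob (int (Suc (Suc m)))) * w ^ Suc (Suc m)"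
    by (simp only: sum.lessThan_Suc)
  also have "\<dots> = w + (w - 1) * (\<Sum>k<Suc m. w ^ k / of_nat k) - w ^ Suc m / of_nat (Suc m)
       + (1 / (of_nat m + 1) - 1 / (of_nat m + 2)) * w ^ Suc (Suc m)"
    by (simp only: Suc.IH tele_prob_Suc_Suc) simp
  also have "\<dots> = w + (w - 1) * (\<Sum>k<Suc (Suc m). w ^ k / of_nat k) - w ^ Suc (Suc m) / of_nat (Suc (Suc m))"
    by (simp add: algebra_simps add_divide_distrib diff_divide_distrib)
  finally show ?case .
qed

lemma phi_tele_prob_disc:
  fixes w :: complex
  assumes "cmod w < 1"
  shows "phi tele_prob w = w + (1 - w) * Ln (1 - w)"
proof -
  have "(\<lambda>n. - (w ^ n) / of_nat n) sums Ln (1 - w)"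
    using Ln_series'[of "- w"] assms by simp
  hence "(\<lambda>n. w ^ n / of_nat n) sums (- Ln (1 - w))"
    using sums_minus by fastforce
  hence log: "(\<lambda>m. \<Sum>k<Suc m. w ^ k / of_nat k) \<longlonglongrightarrow> - Ln (1 - w)"
    unfolding sums_def by (rule LIMSEQ_Suc)
  have "(\<lambda>m. w ^ Suc m / of_nat (Suc m)) \<longlonglongrightarrow> 0"
  proof (rule Lim_null_comparison[where g = "\<lambda>m. cmod w ^ Suc m"])
    have "norm (w ^ Suc m / of_nat (Suc m)) \<le> cmod w ^ Suc m" for m
    proof -
      have "norm (w ^ Suc m / of_nat (Suc m)) = cmod w ^ Suc m / real (Suc m)"
        by (simp only: norm_divide norm_power norm_of_nat)
      also have "\<dots> \<le> cmod w ^ Suc m"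
        using mult_left_mono[of 1 "real (Suc m)" "cmod w ^ Suc m"]
        by (simp add: divide_le_eq del: of_nat_Suc)
      finally show ?thesis .
    qed
    thus "\<forall>\<^sub>F m in sequentially. norm (w ^ Suc m / of_nat (Suc m)) \<le> cmod w ^ Suc m"
      by simp
    show "(\<lambda>m. cmod w ^ Suc m) \<longlonglongrightarrow> 0"
      using LIMSEQ_Suc[OF LIMSEQ_power_zero[of "cmod w"]] assms by simp
  qed
  hence "(\<lambda>m. \<Sum>k<Suc (Suc m). complex_of_real (tele_prob (int k)) * w ^ k)
           \<longlonglongrightarrow> w + (w - 1) * (- Ln (1 - w)) - 0"
    unfolding sum_gen_fun_tele_prob_lessThan by (intro tendsto_intros log)
  hence "(\<lambda>m. \<Sum>k<m + 2. complex_of_real (tele_prob (int k)) * w ^ k) \<longlonglongrightarrow> w + (1 - w) * Ln (1 - w)"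
    by (simp add: algebra_simps)
  hence "(\<lambda>k. complex_of_real (tele_prob (int k)) * w ^ k) sums (w + (1 - w) * Ln (1 - w))"
    unfolding sums_def by (rule LIMSEQ_offset)
  thus ?thesis unfolding phi_def by (rule sums_unique[symmetric])
qed

lemma phi_tele_prob:
  fixes w :: complex
  assumes "cmod w \<le> 1" "w \<noteq> 1"
  shows "phi tele_prob w = w + (1 - w) * Ln (1 - w)"
proof (rule phi_eq_if_eq_on_disc[OF PZplus_tele_prob _ phi_tele_prob_disc assms])
  have "1 - z \<notin> \<real>\<^sub>\<le>\<^sub>0" if "z \<in> cball 0 1 - {1}" for z :: complex
  proof
    assume "1 - z \<in> \<real>\<^sub>\<le>\<^sub>0"
    then obtain r where r: "1 - z = of_real r" "r \<le> 0"
      by (auto simp: nonpos_Reals_def)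
    hence "z = of_real (1 - r)" by (simp add: algebra_simps)
    hence "cmod z = \<bar>1 - r\<bar>" by (simp only: norm_of_real)
    thus False using that r \<open>z = of_real (1 - r)\<close> by auto
  qed
  thus "continuous_on (cball 0 1 - {1}) (\<lambda>w. w + (1 - w) * Ln (1 - w))"
    by (intro continuous_intros) auto
qed

lemma one_minus_Fhat_tele_prob:
  assumes "exp (- \<i> * of_real \<xi>) \<noteq> 1"
  shows "1 - Fhat tele_prob \<xi>
           = (1 - exp (- \<i> * of_real \<xi>)) * (1 - Ln (1 - exp (- \<i> * of_real \<xi>)))"
  using phi_tele_prob[of "exp (- \<i> * of_real \<xi>)"] assms
  by (simp add: Fhat_eq_phi[OF PZplus_tele_prob] norm_exp_eq_Re algebra_simps)

lemma eventually_exp_ne_one: "\<forall>\<^sub>F \<xi> in at (0::real). exp (- \<i> * of_real \<xi>) \<noteq> 1"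
proof -
  have "\<forall>\<^sub>F \<xi> in at (0::real). \<xi> \<noteq> 0 \<and> \<bar>\<xi>\<bar> < pi"
    unfolding eventually_at by (intro exI[of _ pi]) (auto simp: dist_real_def)
  thus ?thesis
  proof eventually_elim
    case (elim \<xi>)
    hence "sin \<xi> \<noteq> 0"
      using sin_gt_zero[of \<xi>] sin_gt_zero[of "- \<xi>"] by (cases "0 < \<xi>") auto
    thus ?case by (auto simp: complex_eq_iff Im_exp)
  qed
qed

lemma filterlim_norm_one_minus_exp:
  "filterlim (\<lambda>\<xi>. cmod (1 - exp (- \<i> * of_real \<xi>))) (at_right 0) (at (0::real))"
proof -
  have "((\<lambda>\<xi>::real. 1 - exp (- \<i> * of_real \<xi>)) \<longlongrightarrow> 0) (at 0)"
    by (auto intro!: tendsto_eq_intros)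
  thus ?thesis
    unfolding filterlim_at using tendsto_norm_zero eventually_exp_ne_one
    by (auto elim!: eventually_mono)
qed

lemma tendsto_abs_Arg_one_minus_Fhat_tele_prob:
  "((\<lambda>\<xi>. \<bar>Arg (1 - Fhat tele_prob \<xi>)\<bar>) \<longlongrightarrow> pi / 2) (at 0)"
proof -
  define u where "u \<xi> = 1 - exp (- \<i> * of_real \<xi>)" for \<xi> :: real
  have u_lim: "filterlim (\<lambda>\<xi>. cmod (u \<xi>)) (at_right 0) (at 0)"
    unfolding u_def by (rule filterlim_norm_one_minus_exp)
  have "\<forall>\<^sub>F \<xi> in at 0. cmod (u \<xi>) \<in> {0<..<1}"
    by (rule eventually_compose_filterlim[OF eventually_at_right_real u_lim]) simp
  hence good: "\<forall>\<^sub>F \<xi> in at 0. u \<xi> \<noteq> 0 \<and> cmod (u \<xi>) < 1"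
    by eventually_elim auto
  have "((\<lambda>t::real. t / 2 + pi / (1 - ln t)) \<longlongrightarrow> 0) (at_right 0)"
    by real_asymp
  from filterlim_compose[OF this u_lim]
  have bound_lim: "((\<lambda>\<xi>. cmod (u \<xi>) / 2 + pi / (1 - ln (cmod (u \<xi>)))) \<longlongrightarrow> 0) (at 0)" .
  have circle: "cmod (1 - u \<xi>) = 1" for \<xi> by (simp add: u_def norm_exp_eq_Re)
  have eq: "1 - Fhat tele_prob \<xi> = u \<xi> * (1 - Ln (u \<xi>))" if "u \<xi> \<noteq> 0" for \<xi>
    using that one_minus_Fhat_tele_prob[of \<xi>] by (simp add: u_def)
  show ?thesis
  proof (rule abs_Arg_tendsto_pi_half)
    show "\<forall>\<^sub>F \<xi> in at 0. 1 - Fhat tele_prob \<xi> \<noteq> 0"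
      using good by eventually_elim (metis eq mult_one_minus_Ln_ne_zero)
    show "((\<lambda>\<xi>. Re (1 - Fhat tele_prob \<xi>) / cmod (1 - Fhat tele_prob \<xi>)) \<longlongrightarrow> 0) (at 0)"
    proof (rule Lim_null_comparison[OF _ bound_lim])
      show "\<forall>\<^sub>F \<xi> in at 0. norm (Re (1 - Fhat tele_prob \<xi>) / cmod (1 - Fhat tele_prob \<xi>))
              \<le> cmod (u \<xi>) / 2 + pi / (1 - ln (cmod (u \<xi>)))"
        using good
      proof eventually_elim
        case (elim \<xi>)
        hence u: "u \<xi> \<noteq> 0" "cmod (u \<xi>) < 1" by simp_all
        have "norm (Re z / cmod z) = \<bar>Re z\<bar> / cmod z" for z :: complex
          by (simp add: abs_divide)
        thus ?case
          using abs_Re_div_norm_mult_one_minus_Ln_le[OF u circle] by (simp only: eq[OF u(1)])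
      qed
    qed
  qed
qed

theorem theorem6p2:
  shows "\<exists>F. PZplus F \<and> aperiodic F
    \<and> \<not> summable (\<lambda>k::nat. real k * F (int k))
    \<and> ((\<lambda>\<xi>. \<bar>Arg (1 - Fhat F \<xi>)\<bar>) \<longlongrightarrow> pi / 2) (at 0)
    \<and> \<not> (\<exists>\<theta>. 0 < \<theta> \<and> \<theta> < pi / 2 \<and>
          (\<forall>w. cmod w \<le> 1 \<longrightarrow>
             phi F w \<in> ball 0 1 \<union> {1} \<and> 1 - phi F w \<in> Lambda_bar \<theta>))
    \<and> F \<notin> classA"
proof (intro exI conjI)
  show "PZplus tele_prob" "aperiodic tele_prob" "\<not> summable (\<lambda>k. real k * tele_prob (int k))"
    by (fact PZplus_tele_prob aperiodic_tele_prob not_summable_first_moment_tele_prob)+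
  note Arg_lim = tendsto_abs_Arg_one_minus_Fhat_tele_prob
  show "((\<lambda>\<xi>. \<bar>Arg (1 - Fhat tele_prob \<xi>)\<bar>) \<longlongrightarrow> pi / 2) (at 0)" by (fact Arg_lim)
  show "tele_prob \<notin> classA"
    by (rule not_classA_if_abs_Arg_tendsto[OF PZplus_tele_prob Arg_lim])
  show "\<not> (\<exists>\<theta>. 0 < \<theta> \<and> \<theta> < pi / 2 \<and> (\<forall>w. cmod w \<le> 1 \<longrightarrow>
          phi tele_prob w \<in> ball 0 1 \<union> {1} \<and> 1 - phi tele_prob w \<in> Lambda_bar \<theta>))"
    using exists_outside_sector_if_abs_Arg_tendsto[OF PZplus_tele_prob Arg_lim] by blast
qed

end
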